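(* Let $n\ge 3$ and let $s,t\in\{-1,1\}^{n}$ with $s\neq t$ and $\sharp_{n}(s)=\sharp_{n}(t)$. Let $(\beta_{1},\beta_{2})\in(0,1)^2$ satisfy $\beta_{1}+\beta_{2}>1$ and \[ \sum_{k=1}^{n}\Big(s_{k}\beta_{1}^{\sharp_{k}(s)}\beta_{2}^{\tilde\sharp_{k}(s)}-t_{k}\beta_{1}^{\sharp_{k}(t)}\beta_{2}^{\tilde\sharp_{k}(t)}\Big)=0 .\] Then there is a $p\in(0,1)$ such that $SD^{p}_{\beta_{1},\beta_{2}}>1$, but the measure $\mu^{p}_{\beta_{1},\beta_{2}}$ is singular (with respect to Lebesgue measure) and $\dim_{H}\mu^{p}_{\beta_{1},\beta_{2}}<1$.
   Context: For $\beta_{1},\beta_{2}\in(0,1)$ let $T_{1}(x)=\beta_{1}x+\beta_{1}$ and $T_{2}(x)=\beta_{2}x-\beta_{2}$ on $\mathbb{R}$. For $p\in(0,1)$, $\mu^{p}_{\beta_{1},\beta_{2}}$ denotes the unique Borel probability measure on $\mathbb{R}$ with $\mu^{p}_{\beta_{1},\beta_{2}}=p\,T_{1}(\mu^{p}_{\beta_{1},\beta_{2}})+(1-p)\,T_{2}(\mu^{p}_{\beta_{1},\beta_{2}})$, where $T_i(\mu)$ is the push-forward $\mu\circ T_i^{-1}$. The similarity dimension is \[ SD^{p}_{\beta_{1},\beta_{2}}=\frac{-p\log p-(1-p)\log(1-p)}{-p\log\beta_{1}-(1-p)\log\beta_{2}}.\] For $s\in\{-1,1\}^{n}$ and $1\le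 k\le n$, $\sharp_{k}(s)$ is the number of entries of $(s_{1},\dots,s_{k})$ equal to $1$ and $\tilde\sharp_{k}(s)=k-\sharp_{k}(s)$. Equivalently, $(\beta_1,\beta_2)$ lies on the algebraic curve $c_{s,t}=\{(x,y):\sum_{k=1}^{n}(s_{k}x^{\sharp_{k}(s)}y^{\tilde\sharp_{k}(s)}-t_{k}x^{\sharp_{k}(t)}y^{\tilde\sharp_{k}(t)})=0\}$. The Hausdorff dimension of a measure $\mu$ is $\dim_H\mu=\inf\{\dim_H A: A \text{ Borel}, \mu(A)=1\}$. *)

theory Defs
  imports "HOL-Analysis.Analysis"
begin

definition T1 :: "real \<Rightarrow> real \<Rightarrow> real" where
  "T1 b1 x = b1 * x + b1"

definition T2 :: "real \<Rightarrow> real \<Rightarrow> real" where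
  "T2 b2 x = b2 * x - b2"

definition is_selfsim :: "real \<Rightarrow> real \<Rightarrow> real \<Rightarrow> real measure \<Rightarrow> bool" where
  "is_selfsim b1 b2 p M \<longleftrightarrow>
     sets M = sets borel \<and> emeasure M (space M) = 1 \<and>
     (\<forall>A \<in> sets borel.
        emeasure M A = ennreal p * emeasure (distr M borel (T1 b1)) A
                     + ennreal (1 - p) * emeasure (distr M borel (T2 b2)) A)"

definition selfsim_measure :: "real \<Rightarrow> real \<Rightarrow> real \<Rightarrow> real measure" where
  "selfsim_measure b1 b2 p = (THE M. is_selfsim b1 b2 p M)"

definition sim_dim :: "real \<Rightarrow> real \<Rightarrow> real \<Rightarrow> real" where
  "sim_dim b1 b2 p =
     (- p * ln p - (1 - p) * ln (1 - p)) / (- p * ln b1 - (1 - p) * ln b2)"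

definition hausdorff_pre :: "real \<Rightarrow> real \<Rightarrow> real set \<Rightarrow> ennreal" where
  "hausdorff_pre s \<delta> A =
     (INF U \<in> {U :: nat \<Rightarrow> real set. A \<subseteq> (\<Union>i. U i) \<and> (\<forall>i. diameter (U i) \<le> \<delta>)}.
        (\<Sum>i. ennreal (diameter (U i) powr s)))"

definition hausdorff_measure :: "real \<Rightarrow> real set \<Rightarrow> ennreal" where
  "hausdorff_measure s A = (SUP \<delta> \<in> {0<..}. hausdorff_pre s \<delta> A)"

definition hausdorff_dim :: "real set \<Rightarrow> ereal" where
  "hausdorff_dim A = Inf {ereal s | s. 0 \<le> s \<and> hausdorff_measure s A = 0}"

definition hausdorff_dim_measure :: "real measure \<Rightarrow> ereal" where
  "hausdorff_dim_measure M =
     Inf {hausdorff_dim A | A. A \<in> sets borel \<and> emeasure M A = 1}"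

definition singular_lebesgue :: "real measure \<Rightarrow> bool" where
  "singular_lebesgue M \<longleftrightarrow>
     (\<exists>A \<in> sets borel. emeasure M A = 0 \<and> emeasure lborel (UNIV - A) = 0)"

definition sharp :: "(nat \<Rightarrow> int) \<Rightarrow> nat \<Rightarrow> nat" where
  "sharp s k = card {j \<in> {1..k}. s j = 1}"

definition sharp_tilde :: "(nat \<Rightarrow> int) \<Rightarrow> nat \<Rightarrow> nat" where
  "sharp_tilde s k = k - sharp s k"

end

(* Write H(p) = - p ln p - (1 - p) ln (1 - p) and chi(p) = - p ln b1 - (1 - p) ln b2, so SD = H / chi.
   Let u and v be the words coded by s and t. Since sharp s n = sharp t n, the n-fold compositions
   T_u and T_v have the same contraction ratio, and the curve equation says exactly that they have
   the same translation part: T_u = T_v. The self-similar measure mu is therefore also invariant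
   for the system of the 2^n - 1 distinct n-fold compositions in which u and v are merged into one
   map of weight 2P, P = p^a (1-p)^(n-a), a = sharp s n. Merging lowers the entropy from n H(p) to
   n H(p) - 2 P ln 2 but leaves the Lyapunov exponent n chi(p) unchanged. The function H - chi equals
   ln (b1 + b2) > 0 at p = b1 / (b1 + b2) and is negative near 0, so some p has
   0 < H(p) - chi(p) < 2 P ln 2 / n: then SD > 1, while the merged system has entropy below its
   Lyapunov exponent.

   For such a system pick 0 < s < 1 and theta > 0 with sum_c q_c^(1-theta) r_c^(s theta) < 1.
   Among the words of length k, those with r_w^s <= gamma^k q_w have total s-content at most
   gamma^k, and by a Chebyshev bound the others carry mass at most sqrt(phi)^k. By Borel-Cantelli,
   mu is carried by the limsup of the images of the convex hull of the attractor under the first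
   kind of words, a Lebesgue-null set of zero s-dimensional Hausdorff measure.

   That mu exists is seen from the law of a random address; uniqueness follows from the functional
   equation of its characteristic function. *)

theory Submission
  imports Defs "HOL-Probability.Probability" "HOL-Real_Asymp.Real_Asymp"
begin

definition words :: "'c set \<Rightarrow> nat \<Rightarrow> 'c list set" where
  "words C k = {w. set w \<subseteq> C \<and> length w = k}"

lemma words_0 [simp]: "words C 0 = {[]}"
  by (auto simp: words_def)

lemma words_Suc: "words C (Suc k) = (\<lambda>(c, w). c # w) ` (C \<times> words C k)"
  by (auto simp: words_def length_Suc_conv image_iff)

lemma finite_words: "finite C \<Longrightarrow> finite (words C k)"
  unfolding words_def by (rule finite_lists_length_eq)

lemma prod_list_map_pos: "(\<And>c. c \<in> set w \<Longrightarrow> 0 < f c) \<Longrightarrow> (0::real) < prod_list (map f w)"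
  by (induction w) auto

lemma prod_list_map_le_power:
  "(\<And>c. c \<in> set w \<Longrightarrow> 0 \<le> f c \<and> f c \<le> b) \<Longrightarrow> prod_list (map f w) \<le> (b :: real) ^ length w"
proof (induction w)
  case (Cons c w)
  then have c: "0 \<le> f c" "f c \<le> b"
    by auto
  then have "0 \<le> b"
    by linarith
  with c Cons show ?case
    by (auto intro!: mult_mono prod_list_nonneg)
qed simp

lemma prod_list_powr_mult:
  fixes q r :: "'c \<Rightarrow> real"
  assumes "\<And>c. c \<in> set w \<Longrightarrow> 0 < q c" "\<And>c. c \<in> set w \<Longrightarrow> 0 < r c"
  shows "prod_list (map q w) powr x * prod_list (map r w) powr y = prod_list (map (\<lambda>c. q c powr x * r c powr y) w)"
  using assms by (induction w) (auto simp: powr_mult prod_list_map_pos less_imp_le)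

lemma sum_words_Suc: "(\<Sum>w\<in>words C (Suc k). f w) = (\<Sum>c\<in>C. \<Sum>w\<in>words C k. f (c # w))"
proof -
  have "inj_on (\<lambda>(c, w). c # w) (C \<times> words C k)"
    by (auto simp: inj_on_def)
  then show ?thesis
    unfolding words_Suc by (simp add: sum.reindex sum.cartesian_product split_def)
qed

lemma sum_words_prod_list:
  fixes g :: "'c \<Rightarrow> 'a::comm_semiring_1"
  shows "(\<Sum>w\<in>words C k. prod_list (map g w)) = (\<Sum>c\<in>C. g c) ^ k"
  by (induction k) (simp_all add: sum_words_Suc sum_distrib_left[symmetric] sum_distrib_right[symmetric])

lemma sum_words_prod_list_mult_sum_list:
  fixes q h :: "'c \<Rightarrow> real"
  assumes "finite C" "(\<Sum>c\<in>C. q c) = 1"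
  shows "(\<Sum>w\<in>words C k. prod_list (map q w) * sum_list (map h w)) = k * (\<Sum>c\<in>C. q c * h c)"
proof (induction k)
  case (Suc k)
  have "(\<Sum>w\<in>words C (Suc k). prod_list (map q w) * sum_list (map h w))
      = (\<Sum>c\<in>C. q c * h c * (\<Sum>w\<in>words C k. prod_list (map q w))
               + q c * (\<Sum>w\<in>words C k. prod_list (map q w) * sum_list (map h w)))"
    by (simp add: sum_words_Suc sum.distrib sum_distrib_left algebra_simps)
  also have "\<dots> = (\<Sum>c\<in>C. q c * h c + q c * (k * (\<Sum>c\<in>C. q c * h c)))"
    by (simp only: Suc sum_words_prod_list assms(2)) simp
  also have "\<dots> = Suc k * (\<Sum>c\<in>C. q c * h c)"
    using assms(2) by (simp add: sum.distrib flip: sum_distrib_right) (simp add: algebra_simps)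
  finally show ?case .
qed simp

lemma sum_words_prod_list_ln:
  fixes q f :: "'c \<Rightarrow> real"
  assumes "finite C" "(\<Sum>c\<in>C. q c) = 1" "\<And>c. c \<in> C \<Longrightarrow> 0 < f c"
  shows "(\<Sum>w\<in>words C k. prod_list (map q w) * ln (prod_list (map f w))) = k * (\<Sum>c\<in>C. q c * ln (f c))"
proof -
  have "0 < prod_list (map f w) \<and> ln (prod_list (map f w)) = sum_list (map (\<lambda>c. ln (f c)) w)"
    if "set w \<subseteq> C" for w
    using that assms(3) by (induction w) (auto simp: ln_mult less_imp_neq[symmetric])
  then have "(\<Sum>w\<in>words C k. prod_list (map q w) * ln (prod_list (map f w)))
      = (\<Sum>w\<in>words C k. prod_list (map q w) * sum_list (map (\<lambda>c. ln (f c)) w))"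
    by (intro sum.cong) (auto simp: words_def)
  then show ?thesis
    using sum_words_prod_list_mult_sum_list[OF assms(1,2)] by simp
qed

(* The composition S_(w_1) o ... o S_(w_k) of the affine maps S_c x = r c * x + a c
   is x \<mapsto> prod_list (map r w) * x + word_shift r a w. *)
fun word_shift :: "('c \<Rightarrow> real) \<Rightarrow> ('c \<Rightarrow> real) \<Rightarrow> 'c list \<Rightarrow> real" where
  "word_shift r a [] = 0"
| "word_shift r a (c # w) = r c * word_shift r a w + a c"

lemma word_shift_snoc: "word_shift r a (w @ [c]) = word_shift r a w + prod_list (map r w) * a c"
  by (induction w) (auto simp: algebra_simps)

section \<open>Measures invariant under an iterated function system\<close>

definition ifs_invariant ::
    "real measure \<Rightarrow> 'c set \<Rightarrow> ('c \<Rightarrow> real) \<Rightarrow> ('c \<Rightarrow> real) \<Rightarrow> ('c \<Rightarrow> real) \<Rightarrow> bool" where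
  "ifs_invariant M C q r a \<longleftrightarrow> sets M = sets borel \<and>
     (\<forall>A\<in>sets borel. emeasure M A = (\<Sum>c\<in>C. ennreal (q c) * emeasure M ((\<lambda>x. r c * x + a c) -` A)))"

lemma ifs_invariant_words:
  assumes inv: "ifs_invariant M C q r a" and q: "\<And>c. c \<in> C \<Longrightarrow> 0 \<le> q c"
  shows "ifs_invariant M (words C k) (\<lambda>w. prod_list (map q w)) (\<lambda>w. prod_list (map r w)) (word_shift r a)"
  unfolding ifs_invariant_def
proof (intro conjI ballI)
  show "sets M = sets borel"
    using inv by (simp add: ifs_invariant_def)
  fix A :: "real set" assume "A \<in> sets borel"
  then show "emeasure M A = (\<Sum>w\<in>words C k. ennreal (prod_list (map q w)) *
      emeasure M ((\<lambda>x. prod_list (map r w) * x + word_shift r a w) -` A))"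
  proof (induction k arbitrary: A)
    case (Suc k)
    have q_words: "0 \<le> prod_list (map q w)" if "w \<in> words C k" for w
      using that unfolding words_def by (auto intro!: prod_list_nonneg q)
    have "emeasure M A = (\<Sum>c\<in>C. ennreal (q c) * emeasure M ((\<lambda>x. r c * x + a c) -` A))"
      using inv Suc.prems by (simp add: ifs_invariant_def)
    also have "\<dots> = (\<Sum>c\<in>C. \<Sum>w\<in>words C k. ennreal (q c) * ennreal (prod_list (map q w)) *
        emeasure M ((\<lambda>x. r c * (prod_list (map r w) * x + word_shift r a w) + a c) -` A))"
      using Suc.IH[OF measurable_sets_borel[OF _ Suc.prems]]
      by (simp add: sum_distrib_left vimage_comp comp_def mult.assoc)
    also have "\<dots> = (\<Sum>w\<in>words C (Suc k). ennreal (prod_list (map q w)) *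
        emeasure M ((\<lambda>x. prod_list (map r w) * x + word_shift r a w) -` A))"
      using q q_words by (simp add: sum_words_Suc ennreal_mult algebra_simps)
    finally show ?case .
  qed simp
qed

lemma ifs_invariant_merge:
  assumes inv: "ifs_invariant M C q r a" and "finite C" "u \<in> C" "v \<in> C" "u \<noteq> v"
    and "r u = r v" "a u = a v" "0 \<le> q u" "0 \<le> q v"
  shows "ifs_invariant M (C - {v}) (q(u := q u + q v)) r a"
  unfolding ifs_invariant_def
proof (intro conjI ballI)
  show "sets M = sets borel"
    using inv by (simp add: ifs_invariant_def)
  fix A :: "real set" assume A: "A \<in> sets borel"
  define F where "F c = ennreal (q c) * emeasure M ((\<lambda>x. r c * x + a c) -` A)" for c
  have "emeasure M A = (\<Sum>c\<in>C. F c)"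
    using inv A by (simp add: ifs_invariant_def F_def)
  also have "\<dots> = F v + (F u + (\<Sum>c\<in>C - {v} - {u}. F c))"
    using assms(2-5) by (simp add: sum.remove[of C v] sum.remove[of "C - {v}" u])
  also have "\<dots> = (\<Sum>c\<in>C - {v}. ennreal ((q(u := q u + q v)) c) * emeasure M ((\<lambda>x. r c * x + a c) -` A))"
    using assms(2-9) by (simp add: F_def sum.remove[of "C - {v}" u] ennreal_plus distrib_right add_ac)
  finally show "emeasure M A = \<dots>" .
qed

lemma sum_merge:
  fixes h :: "'a \<Rightarrow> 'c \<Rightarrow> 'b::ab_group_add"
  assumes "finite C" "u \<in> C" "v \<in> C" "u \<noteq> v"
  shows "(\<Sum>c\<in>C - {v}. h ((q(u := x)) c) c) = h x u + (\<Sum>c\<in>C. h (q c) c) - h (q u) u - h (q v) v"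
proof -
  have "(\<Sum>c\<in>C. h (q c) c) = h (q v) v + (h (q u) u + (\<Sum>c\<in>C - {v} - {u}. h (q c) c))"
    using assms by (simp add: sum.remove[of C v] sum.remove[of "C - {v}" u])
  moreover have "(\<Sum>c\<in>C - {v}. h ((q(u := x)) c) c) = h x u + (\<Sum>c\<in>C - {v} - {u}. h (q c) c)"
    using assms by (simp add: sum.remove[of "C - {v}" u])
  ultimately show ?thesis
    by (simp add: algebra_simps)
qed

section \<open>Small limsup sets\<close>

lemma hausdorff_pre_le_UN:
  assumes "A \<subseteq> (\<Union>k. \<Union>i\<in>I k. U k i)" "\<And>k. finite (I k)"
    and "\<And>k i. i \<in> I k \<Longrightarrow> diameter (U k i) \<le> \<delta>" "0 \<le> \<delta>"
  shows "hausdorff_pre s \<delta> A \<le> (\<Sum>k. ennreal (\<Sum>i\<in>I k. diameter (U k i) powr s))"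
proof -
  have "\<forall>k. \<exists>e. bij_betw e {0..<card (I k)} (I k)"
    using ex_bij_betw_nat_finite assms(2) by blast
  then obtain e where e: "\<And>k. bij_betw (e k) {0..<card (I k)} (I k)"
    by metis
  \<comment> \<open>A single cover indexed by \<open>nat\<close>: \<open>prod_decode\<close> enumerates the pairs \<open>(k, j)\<close>, padded with empty sets.\<close>
  define V where "V m = (case prod_decode m of (k, j) \<Rightarrow> if j < card (I k) then U k (e k j) else {})" for m
  define F where "F p = ennreal (diameter (V (prod_encode p)) powr s)" for p
  have V_encode: "V (prod_encode (k, j)) = (if j < card (I k) then U k (e k j) else {})" for k j
    by (simp add: V_def)
  have "A \<subseteq> (\<Union>m. V m)"
  proof
    fix x assume "x \<in> A"
    then obtain k i where "i \<in> I k" "x \<in> U k i"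
      using assms(1) by blast
    moreover have "i \<in> e k ` {0..<card (I k)}"
      using bij_betw_imp_surj_on[OF e[of k]] \<open>i \<in> I k\<close> by simp
    then obtain j where "j < card (I k)" "e k j = i"
      by auto
    ultimately have "x \<in> V (prod_encode (k, j))"
      by (simp add: V_encode)
    then show "x \<in> (\<Union>m. V m)"
      by blast
  qed
  moreover have "diameter (V m) \<le> \<delta>" for m
  proof -
    obtain k j where kj: "prod_decode m = (k, j)"
      by (cases "prod_decode m")
    show ?thesis
    proof (cases "j < card (I k)")
      case True
      then have "e k j \<in> I k"
        using bij_betwE[OF e[of k]] by simp
      then show ?thesis
        using True assms(3) by (simp add: V_def kj)
    qed (use assms(4) in \<open>simp add: V_def kj\<close>)
  qed
  ultimately have "hausdorff_pre s \<delta> A \<le> (\<Sum>m. ennreal (diameter (V m) powr s))"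
    unfolding hausdorff_pre_def by (intro INF_lower) auto
  also have "\<dots> = (\<Sum>m. F (prod_decode m))"
    by (simp add: F_def)
  also have "\<dots> = (\<Sum>k. \<Sum>j. F (k, j))"
    by (rule suminf_ennreal_2dimen) (rule refl)
  also have "\<dots> = (\<Sum>k. ennreal (\<Sum>i\<in>I k. diameter (U k i) powr s))"
  proof (rule suminf_cong)
    fix k
    have "(\<Sum>j. F (k, j)) = (\<Sum>j<card (I k). ennreal (diameter (U k (e k j)) powr s))"
      by (subst suminf_finite[of "{..<card (I k)}"]) (simp_all add: F_def V_encode)
    also have "\<dots> = (\<Sum>i\<in>I k. ennreal (diameter (U k i) powr s))"
      by (rule sum.reindex_bij_betw[OF e[of k], unfolded atLeast0LessThan])
    finally show "(\<Sum>j. F (k, j)) = ennreal (\<Sum>i\<in>I k. diameter (U k i) powr s)"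
      by (simp add: sum_ennreal)
  qed
  finally show ?thesis .
qed

lemma hausdorff_measure_limsup_eq_0:
  assumes fin: "\<And>k. finite (I k)"
    and diam: "\<And>k i. i \<in> I k \<Longrightarrow> diameter (U k i) \<le> d k" and "d \<longlonglongrightarrow> 0"
    and summ: "summable (\<lambda>k. \<Sum>i\<in>I k. diameter (U k i) powr s)"
  shows "hausdorff_measure s (limsup (\<lambda>k. \<Union>i\<in>I k. U k i)) = 0"
proof -
  define f where "f k = (\<Sum>i\<in>I k. diameter (U k i) powr s)" for k
  have "hausdorff_pre s \<delta> (limsup (\<lambda>k. \<Union>i\<in>I k. U k i)) = 0" if "0 < \<delta>" for \<delta>
  proof -
    obtain N where N: "\<And>k. N \<le> k \<Longrightarrow> d k \<le> \<delta>"
      using order_tendstoD(2)[OF \<open>d \<longlonglongrightarrow> 0\<close> \<open>0 < \<delta>\<close>]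
      unfolding eventually_sequentially by (meson less_imp_le)
    have "hausdorff_pre s \<delta> (limsup (\<lambda>k. \<Union>i\<in>I k. U k i)) \<le> ennreal (\<Sum>k. f (k + j))" if "N \<le> j" for j
    proof -
      have "limsup (\<lambda>k. \<Union>i\<in>I k. U k i) \<subseteq> (\<Union>k. \<Union>i\<in>I (k + j). U (k + j) i)"
      proof
        fix x assume "x \<in> limsup (\<lambda>k. \<Union>i\<in>I k. U k i)"
        then have "\<exists>m\<ge>j. x \<in> (\<Union>i\<in>I m. U m i)"
          by (auto simp: limsup_INF_SUP) (metis atLeast_iff)
        then obtain m where "j \<le> m" "x \<in> (\<Union>i\<in>I m. U m i)"
          by blast
        then show "x \<in> (\<Union>k. \<Union>i\<in>I (k + j). U (k + j) i)"
          by (intro UN_I[of "m - j"]) auto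
      qed
      moreover have "diameter (U (k + j) i) \<le> \<delta>" if "i \<in> I (k + j)" for k i
        using diam[OF that] N[of "k + j"] \<open>N \<le> j\<close> by linarith
      ultimately have "hausdorff_pre s \<delta> (limsup (\<lambda>k. \<Union>i\<in>I k. U k i)) \<le> (\<Sum>k. ennreal (f (k + j)))"
        unfolding f_def using \<open>0 < \<delta>\<close> by (intro hausdorff_pre_le_UN fin) auto
      also have "\<dots> = ennreal (\<Sum>k. f (k + j))"
        using summable_ignore_initial_segment[OF summ[folded f_def], of j]
        by (intro suminf_ennreal2) (auto simp: f_def sum_nonneg)
      finally show ?thesis .
    qed
    moreover have "(\<lambda>j. ennreal (\<Sum>k. f (k + j))) \<longlonglongrightarrow> ennreal 0"
      using suminf_exist_split2[OF summ[folded f_def]] by (rule tendsto_ennrealI)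
    ultimately show ?thesis
      using LIMSEQ_le_const[of _ 0 "hausdorff_pre s \<delta> (limsup (\<lambda>k. \<Union>i\<in>I k. U k i))"] by auto
  qed
  then have "(SUP \<delta>\<in>{0<..}. hausdorff_pre s \<delta> (limsup (\<lambda>k. \<Union>i\<in>I k. U k i))) = (SUP \<delta>\<in>({0<..}::real set). 0)"
    by (intro SUP_cong) auto
  then show ?thesis
    unfolding hausdorff_measure_def by simp
qed

lemma limsup_intervals_concentrated:
  fixes c rad :: "'i \<Rightarrow> real"
  assumes M: "prob_space M" "sets M = sets borel"
    and fin: "\<And>k. finite (I k)"
    and rad: "\<And>k i. i \<in> I k \<Longrightarrow> 0 \<le> rad i \<and> rad i \<le> d k" and "d \<longlonglongrightarrow> 0"
    and sum_M: "summable (\<lambda>k. measure M (- (\<Union>i\<in>I k. {c i - rad i .. c i + rad i})))"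
    and sum_L: "summable (\<lambda>k. \<Sum>i\<in>I k. 2 * rad i)"
    and sum_H: "summable (\<lambda>k. \<Sum>i\<in>I k. (2 * rad i) powr s)"
  shows "\<exists>A\<in>sets borel. emeasure M A = 1 \<and> hausdorff_measure s A = 0 \<and> emeasure lborel A = 0"
proof -
  interpret prob_space M by (fact M(1))
  define B where "B k = (\<Union>i\<in>I k. {c i - rad i .. c i + rad i})" for k
  have B_borel [measurable]: "B k \<in> sets borel" for k
    using fin by (auto simp: B_def)
  have "limsup B \<in> sets borel"
    by measurable
  moreover have "emeasure M (limsup B) = 1"
  proof (rule emeasure_eq_1_AE)
    have "AE x in M. eventually (\<lambda>k. x \<in> space M - (- B k)) sequentially"
      using sum_M[folded B_def] by (intro borel_cantelli_AE1) (auto simp: M(2) less_top[symmetric])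
    then show "AE x in M. x \<in> limsup B"
      by eventually_elim (auto simp: mem_limsup_iff M(2) intro: eventually_frequently)
  qed (simp add: M(2))
  moreover have "limsup B \<in> null_sets lborel"
  proof (rule borel_cantelli_limsup1)
    have "measure lborel (B k) \<le> (\<Sum>i\<in>I k. 2 * rad i)" for k
    proof -
      have "measure lborel (B k) \<le> (\<Sum>i\<in>I k. measure lborel {c i - rad i .. c i + rad i})"
        unfolding B_def using fin by (intro measure_UNION_le) auto
      also have "\<dots> = (\<Sum>i\<in>I k. 2 * rad i)"
        using rad by (intro sum.cong) auto
      finally show ?thesis .
    qed
    then show "summable (\<lambda>k. measure lborel (B k))"
      by (intro summable_comparison_test'[OF sum_L]) simp
    show "emeasure lborel (B k) < \<infinity>" for k
      using fin unfolding B_def by (intro emeasure_compact_finite compact_UN) auto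
  qed simp
  moreover have "hausdorff_measure s (limsup B) = 0"
    unfolding B_def
  proof (rule hausdorff_measure_limsup_eq_0[OF fin])
    show "diameter {c i - rad i .. c i + rad i} \<le> 2 * d k" if "i \<in> I k" for k i
      using rad[OF that] by simp
    show "(\<lambda>k. 2 * d k) \<longlonglongrightarrow> 0"
      using tendsto_mult_right_zero[OF \<open>d \<longlonglongrightarrow> 0\<close>] by simp
    have "(\<Sum>i\<in>I k. diameter {c i - rad i .. c i + rad i} powr s) = (\<Sum>i\<in>I k. (2 * rad i) powr s)" for k
      using rad by (intro sum.cong refl) fastforce
    then show "summable (\<lambda>k. \<Sum>i\<in>I k. diameter {c i - rad i .. c i + rad i} powr s)"
      using sum_H by simp
  qed
  ultimately show ?thesis
    by (metis null_setsD1)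
qed

section \<open>Entropy below the Lyapunov exponent forces a dimension drop\<close>

lemma summable_le_geometric:
  fixes f :: "nat \<Rightarrow> real"
  assumes "\<And>k. 0 \<le> f k" "\<And>k. f k \<le> c * \<gamma> ^ k" "0 \<le> \<gamma>" "\<gamma> < 1"
  shows "summable f"
proof -
  have "summable (\<lambda>k. c * \<gamma> ^ k)"
    using assms(3,4) by (intro summable_mult summable_geometric) auto
  then show ?thesis
    by (rule summable_comparison_test'[where N = 0]) (simp add: assms(1,2))
qed

lemma sum_efficient_words_le:
  fixes q r :: "'c \<Rightarrow> real"
  assumes "finite C" "\<And>c. c \<in> C \<Longrightarrow> 0 \<le> q c" "(\<Sum>c\<in>C. q c) = 1" "0 \<le> g"
  shows "(\<Sum>w\<in>{w \<in> words C k. prod_list (map r w) powr s \<le> g * prod_list (map q w)}. prod_list (map r w) powr s) \<le> g"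
proof -
  let ?E = "{w \<in> words C k. prod_list (map r w) powr s \<le> g * prod_list (map q w)}"
  have "(\<Sum>w\<in>?E. prod_list (map r w) powr s) \<le> (\<Sum>w\<in>?E. g * prod_list (map q w))"
    by (intro sum_mono) simp
  also have "\<dots> \<le> (\<Sum>w\<in>words C k. g * prod_list (map q w))"
    using assms(1,2,4) finite_words[of C k]
    by (intro sum_mono2) (auto simp: words_def intro!: mult_nonneg_nonneg prod_list_nonneg assms(2))
  also have "\<dots> = g"
    using assms(3) by (simp add: sum_words_prod_list flip: sum_distrib_left)
  finally show ?thesis .
qed

lemma sum_where_ratio_large_le:
  fixes Q \<rho> :: "'w \<Rightarrow> real"
  assumes "finite W" "\<And>w. w \<in> W \<Longrightarrow> 0 < Q w" "\<And>w. w \<in> W \<Longrightarrow> 0 < \<rho> w" "0 < g" "0 < \<theta>"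
  shows "(\<Sum>w\<in>{w\<in>W. g * Q w < \<rho> w}. Q w) \<le> (\<Sum>w\<in>W. Q w powr (1 - \<theta>) * \<rho> w powr \<theta>) / g powr \<theta>"
proof -
  have "Q w \<le> Q w powr (1 - \<theta>) * \<rho> w powr \<theta> / g powr \<theta>" if "w \<in> W" "g * Q w < \<rho> w" for w
  proof -
    have "Q w = Q w powr (1 - \<theta>) * Q w powr \<theta>"
      using assms(2)[OF that(1)] by (simp flip: powr_add)
    also have "\<dots> \<le> Q w powr (1 - \<theta>) * (\<rho> w / g) powr \<theta>"
      using assms(2,4,5) that by (intro mult_left_mono powr_mono2) (auto simp: field_simps less_imp_le)
    finally show ?thesis
      using assms(3,4) that(1) by (simp add: powr_divide)
  qed
  then have "(\<Sum>w\<in>{w\<in>W. g * Q w < \<rho> w}. Q w) \<le> (\<Sum>w\<in>{w\<in>W. g * Q w < \<rho> w}. Q w powr (1 - \<theta>) * \<rho> w powr \<theta> / g powr \<theta>)"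
    by (intro sum_mono) auto
  also have "\<dots> \<le> (\<Sum>w\<in>W. Q w powr (1 - \<theta>) * \<rho> w powr \<theta> / g powr \<theta>)"
    using assms(1) by (intro sum_mono2) auto
  finally show ?thesis
    by (simp add: sum_divide_distrib)
qed

lemma ifs_invariant_emeasure_outside_images_le:
  assumes inv: "ifs_invariant M C q r a" and "prob_space M" and supp: "emeasure M {-R..R} = 1"
    and "finite C" "D \<subseteq> C" "\<And>c. c \<in> C \<Longrightarrow> 0 \<le> q c" "\<And>c. c \<in> C \<Longrightarrow> 0 \<le> r c"
  shows "emeasure M (- (\<Union>c\<in>D. {a c - r c * R .. a c + r c * R})) \<le> ennreal (\<Sum>c\<in>C - D. q c)"
proof -
  interpret prob_space M by fact
  have sets: "sets M = sets borel"
    using inv by (simp add: ifs_invariant_def)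
  define X where "X = - (\<Union>c\<in>D. {a c - r c * R .. a c + r c * R})"
  define F where "F c = ennreal (q c) * emeasure M ((\<lambda>x. r c * x + a c) -` X)" for c
  have X: "X \<in> sets borel"
    using finite_subset[OF \<open>D \<subseteq> C\<close> \<open>finite C\<close>] unfolding X_def
    by (intro borel_comp sets.finite_UN) auto
  have outside: "emeasure M (- {-R..R}) = 0"
    using supp sets prob_compl[of "{-R..R}"] sets_eq_imp_space_eq[OF sets]
    by (simp add: emeasure_eq_measure Compl_eq_Diff_UNIV)
  have "F c = 0" if "c \<in> D" for c
  proof -
    have "(\<lambda>x. r c * x + a c) -` X \<subseteq> - {-R..R}"
    proof
      fix x assume x: "x \<in> (\<lambda>x. r c * x + a c) -` X"
      have "0 \<le> r c"
        using that \<open>D \<subseteq> C\<close> assms(7) by auto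
      then have "x \<in> {-R..R} \<Longrightarrow> r c * x + a c \<in> {a c - r c * R .. a c + r c * R}"
        using mult_left_mono[of x R "r c"] mult_left_mono[of "-R" x "r c"] by auto
      then show "x \<in> - {-R..R}"
        using x that by (auto simp: X_def)
    qed
    then have "emeasure M ((\<lambda>x. r c * x + a c) -` X) \<le> emeasure M (- {-R..R})"
      by (rule emeasure_mono) (simp add: sets)
    then have "emeasure M ((\<lambda>x. r c * x + a c) -` X) = 0"
      using outside by simp
    then show ?thesis
      by (simp add: F_def)
  qed
  then have "(\<Sum>c\<in>D. F c) = 0"
    by simp
  moreover have "emeasure M X = (\<Sum>c\<in>C. F c)"
    using inv X by (simp add: ifs_invariant_def F_def)
  ultimately have "emeasure M X = (\<Sum>c\<in>C - D. F c)"
    using sum.subset_diff[OF \<open>D \<subseteq> C\<close> \<open>finite C\<close>, of F] by simp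
  also have "\<dots> \<le> (\<Sum>c\<in>C - D. ennreal (q c))"
    unfolding F_def by (intro sum_mono) (simp add: mult_left_le emeasure_le_1)
  also have "\<dots> = ennreal (\<Sum>c\<in>C - D. q c)"
    using assms(6) by (intro sum_ennreal) auto
  finally show ?thesis
    by (simp add: X_def)
qed

lemma ifs_invariant_mass_outside_efficient_words:
  fixes q r a :: "'c \<Rightarrow> real" and k :: nat and s :: real
  assumes inv: "ifs_invariant M C q r a" and "prob_space M" "emeasure M {-R..R} = 1"
    and C: "finite C" and q: "\<And>c. c \<in> C \<Longrightarrow> 0 < q c" and r: "\<And>c. c \<in> C \<Longrightarrow> 0 < r c"
    and "0 < g" "0 < \<theta>"
  defines "E \<equiv> {w \<in> words C k. prod_list (map r w) powr s \<le> g * prod_list (map q w)}"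
  shows "measure M (- (\<Union>w\<in>E. {word_shift r a w - prod_list (map r w) * R ..
                                  word_shift r a w + prod_list (map r w) * R}))
         \<le> (\<Sum>c\<in>C. q c powr (1 - \<theta>) * r c powr (s * \<theta>)) ^ k / g powr \<theta>"
proof -
  let ?Q = "\<lambda>w. prod_list (map q w)" and ?\<rho> = "\<lambda>w. prod_list (map r w)"
  have pos: "0 < ?Q w" "0 < ?\<rho> w" if "w \<in> words C k" for w
    using that q r by (auto simp: words_def intro!: prod_list_map_pos)
  have "emeasure M (- (\<Union>w\<in>E. {word_shift r a w - ?\<rho> w * R .. word_shift r a w + ?\<rho> w * R}))
      \<le> ennreal (\<Sum>w\<in>words C k - E. ?Q w)"
    using pos finite_words[OF C]
    by (intro ifs_invariant_emeasure_outside_images_le[OF ifs_invariant_words[OF inv] assms(2,3)])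
       (auto simp: E_def less_imp_le q)
  then have "measure M (- (\<Union>w\<in>E. {word_shift r a w - ?\<rho> w * R .. word_shift r a w + ?\<rho> w * R}))
      \<le> (\<Sum>w\<in>words C k - E. ?Q w)"
    unfolding measure_def using pos by (intro enn2real_leI sum_nonneg) (auto simp: less_imp_le)
  also have "\<dots> = (\<Sum>w\<in>{w\<in>words C k. g * ?Q w < ?\<rho> w powr s}. ?Q w)"
    by (intro sum.cong) (auto simp: E_def not_le)
  also have "\<dots> \<le> (\<Sum>w\<in>words C k. ?Q w powr (1 - \<theta>) * (?\<rho> w powr s) powr \<theta>) / g powr \<theta>"
    using pos finite_words[OF C] assms(7,8) by (intro sum_where_ratio_large_le) (auto simp: less_imp_neq[symmetric])
  also have "(\<Sum>w\<in>words C k. ?Q w powr (1 - \<theta>) * (?\<rho> w powr s) powr \<theta>)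
      = (\<Sum>w\<in>words C k. prod_list (map (\<lambda>c. q c powr (1 - \<theta>) * r c powr (s * \<theta>)) w))"
    using q r by (intro sum.cong refl) (auto simp: words_def powr_powr mult.commute intro!: prod_list_powr_mult)
  also have "\<dots> = (\<Sum>c\<in>C. q c powr (1 - \<theta>) * r c powr (s * \<theta>)) ^ k"
    by (rule sum_words_prod_list)
  finally show ?thesis .
qed

lemma ifs_invariant_concentrated_on_null_set:
  fixes q r a :: "'c \<Rightarrow> real"
  assumes inv: "ifs_invariant M C q r a" and M: "prob_space M" and R: "0 < R" "emeasure M {-R..R} = 1"
    and C: "finite C" and q: "\<And>c. c \<in> C \<Longrightarrow> 0 < q c" "(\<Sum>c\<in>C. q c) = 1"
    and r: "\<And>c. c \<in> C \<Longrightarrow> 0 < r c \<and> r c < 1"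
    and s: "0 < s" "s \<le> 1" and \<theta>: "0 < \<theta>"
    and moment: "(\<Sum>c\<in>C. q c powr (1 - \<theta>) * r c powr (s * \<theta>)) < 1"
  shows "\<exists>A\<in>sets borel. emeasure M A = 1 \<and> hausdorff_measure s A = 0 \<and> emeasure lborel A = 0"
proof -
  define \<phi> where "\<phi> = (\<Sum>c\<in>C. q c powr (1 - \<theta>) * r c powr (s * \<theta>))"
  have "C \<noteq> {}"
    using q(2) by auto
  moreover have "0 < q c powr (1 - \<theta>) * r c powr (s * \<theta>)" if "c \<in> C" for c
    using q(1)[OF that] r[OF that] by simp
  ultimately have \<phi>: "0 < \<phi>" "\<phi> < 1"
    using moment C by (auto simp: \<phi>_def intro!: sum_pos)
  \<comment> \<open>With \<open>\<gamma> powr \<theta> = sqrt \<phi>\<close>, both the content of the words in \<open>E k\<close> below and the mass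
    of the remaining words decay like \<open>sqrt \<phi> ^ k\<close> or faster.\<close>
  define \<gamma> where "\<gamma> = \<phi> powr (1 / (2 * \<theta>))"
  have \<gamma>: "0 < \<gamma>" "\<gamma> < 1"
    using \<phi> \<theta> powr_less_mono2[of "1 / (2 * \<theta>)" \<phi> 1] by (auto simp: \<gamma>_def)
  have \<gamma>_powr: "(\<gamma> ^ k) powr \<theta> = sqrt \<phi> ^ k" for k
  proof -
    have "(\<gamma> ^ k) powr \<theta> = (\<phi> powr (1 / 2)) powr k"
      using \<phi> \<theta> by (simp add: \<gamma>_def powr_powr flip: powr_realpow)
    then show ?thesis
      using \<phi> by (simp add: powr_half_sqrt powr_realpow)
  qed
  define rmax where "rmax = Max (r ` C)"
  have "rmax \<in> r ` C"
    using C \<open>C \<noteq> {}\<close> by (simp add: rmax_def)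
  then have rmax: "0 < rmax" "rmax < 1" "\<And>c. c \<in> C \<Longrightarrow> r c \<le> rmax"
    using r C by (auto simp: rmax_def)
  let ?\<rho> = "\<lambda>w. prod_list (map r w)"
  define E where "E k = {w \<in> words C k. ?\<rho> w powr s \<le> \<gamma> ^ k * prod_list (map q w)}" for k
  have E: "finite (E k)" for k
    using finite_words[OF C] by (simp add: E_def)
  have \<rho>: "0 < ?\<rho> w" "?\<rho> w \<le> rmax ^ k" "?\<rho> w \<le> ?\<rho> w powr s" if "w \<in> E k" for w k
  proof -
    have w: "\<And>c. c \<in> set w \<Longrightarrow> c \<in> C" "length w = k"
      using that by (auto simp: E_def words_def)
    show "0 < ?\<rho> w"
      using w r by (auto intro!: prod_list_map_pos)
    show "?\<rho> w \<le> rmax ^ k"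
      using w r rmax(3) prod_list_map_le_power[of w r rmax] by (force simp: less_imp_le)
    moreover have "rmax ^ k \<le> 1"
      using rmax by (simp add: power_le_one)
    ultimately have "?\<rho> w powr 1 \<le> ?\<rho> w powr s"
      using \<open>0 < ?\<rho> w\<close> s by (intro powr_mono') auto
    then show "?\<rho> w \<le> ?\<rho> w powr s"
      using \<open>0 < ?\<rho> w\<close> by simp
  qed
  have efficient: "(\<Sum>w\<in>E k. ?\<rho> w powr s) \<le> \<gamma> ^ k" for k
    unfolding E_def using C q \<gamma> by (intro sum_efficient_words_le) (auto simp: less_imp_le)
  have mass: "measure M (- (\<Union>w\<in>E k. {word_shift r a w - ?\<rho> w * R .. word_shift r a w + ?\<rho> w * R}))
      \<le> sqrt \<phi> ^ k" for k
  proof -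
    have "measure M (- (\<Union>w\<in>E k. {word_shift r a w - ?\<rho> w * R .. word_shift r a w + ?\<rho> w * R}))
        \<le> \<phi> ^ k / (\<gamma> ^ k) powr \<theta>"
      unfolding E_def \<phi>_def
      using q(1) r \<gamma> \<theta> by (intro ifs_invariant_mass_outside_efficient_words[OF inv M R(2) C]) auto
    also have "\<dots> = sqrt \<phi> ^ k"
      using \<phi> by (simp add: \<gamma>_powr real_div_sqrt flip: power_divide)
    finally show ?thesis .
  qed
  show ?thesis
  proof (rule limsup_intervals_concentrated[where I = E and c = "word_shift r a" and rad = "\<lambda>w. ?\<rho> w * R"
        and d = "\<lambda>k. rmax ^ k * R"])
    show "prob_space M" "sets M = sets borel"
      using M inv by (auto simp: ifs_invariant_def)
    show "0 \<le> ?\<rho> w * R \<and> ?\<rho> w * R \<le> rmax ^ k * R" if "w \<in> E k" for k w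
      using \<rho>(1,2)[OF that] R(1) by (auto intro: mult_right_mono)
    show "(\<lambda>k. rmax ^ k * R) \<longlonglongrightarrow> 0"
      using rmax by (intro tendsto_mult_left_zero LIMSEQ_power_zero) auto
    show "summable (\<lambda>k. measure M (- (\<Union>w\<in>E k. {word_shift r a w - ?\<rho> w * R .. word_shift r a w + ?\<rho> w * R})))"
      using mass \<phi> by (intro summable_le_geometric[where c = 1 and \<gamma> = "sqrt \<phi>"]) auto
    have "(\<Sum>w\<in>E k. 2 * (?\<rho> w * R)) \<le> 2 * R * \<gamma> ^ k" for k
    proof -
      have "(\<Sum>w\<in>E k. 2 * (?\<rho> w * R)) \<le> (\<Sum>w\<in>E k. 2 * R * ?\<rho> w powr s)"
        using \<rho>(3) R(1) by (intro sum_mono) auto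
      also have "\<dots> \<le> 2 * R * \<gamma> ^ k"
        using efficient[of k] R(1) by (simp add: sum_distrib_left[symmetric])
      finally show ?thesis .
    qed
    then show "summable (\<lambda>k. \<Sum>w\<in>E k. 2 * (?\<rho> w * R))"
      using \<gamma> \<rho>(1) R(1)
      by (intro summable_le_geometric[where c = "2 * R" and \<gamma> = \<gamma>] sum_nonneg) (auto simp: less_imp_le)
    have "(\<Sum>w\<in>E k. (2 * (?\<rho> w * R)) powr s) = (2 * R) powr s * (\<Sum>w\<in>E k. ?\<rho> w powr s)" for k
      using \<rho>(1) R(1) by (simp add: sum_distrib_left powr_mult mult_ac)
    then show "summable (\<lambda>k. \<Sum>w\<in>E k. (2 * (?\<rho> w * R)) powr s)"
      using efficient \<gamma> by (intro summable_le_geometric[where c = "(2 * R) powr s" and \<gamma> = \<gamma>] sum_nonneg)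
        (auto intro: mult_left_mono)
  qed (fact E)
qed

lemma exists_moment_sum_less_one:
  fixes q r :: "'c \<Rightarrow> real"
  assumes C: "finite C" and q: "\<And>c. c \<in> C \<Longrightarrow> 0 < q c" "(\<Sum>c\<in>C. q c) = 1"
    and r: "\<And>c. c \<in> C \<Longrightarrow> 0 < r c"
    and neg: "(\<Sum>c\<in>C. q c * (s * ln (r c) - ln (q c))) < 0"
  shows "\<exists>\<theta>>0. (\<Sum>c\<in>C. q c powr (1 - \<theta>) * r c powr (s * \<theta>)) < 1"
proof -
  \<comment> \<open>The moment sum as a function of \<open>\<theta>\<close>: it is 1 at 0 and its derivative there is the hypothesis.\<close>
  define f where "f \<theta> = (\<Sum>c\<in>C. q c * exp (\<theta> * (s * ln (r c) - ln (q c))))" for \<theta>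
  have "(f has_real_derivative (\<Sum>c\<in>C. q c * (s * ln (r c) - ln (q c)))) (at 0)"
    unfolding f_def by (auto intro!: derivative_eq_intros simp: mult_ac)
  then obtain d where d: "0 < d" "\<And>h. 0 < h \<Longrightarrow> h < d \<Longrightarrow> f (0 + h) < f 0"
    using DERIV_neg_dec_right neg by blast
  have "f \<theta> = (\<Sum>c\<in>C. q c powr (1 - \<theta>) * r c powr (s * \<theta>))" for \<theta>
    unfolding f_def
  proof (intro sum.cong refl)
    fix c assume "c \<in> C"
    then have "q c \<noteq> 0" "r c \<noteq> 0" "0 < q c"
      using q(1) r by (auto simp: less_imp_neq[symmetric])
    then show "q c * exp (\<theta> * (s * ln (r c) - ln (q c))) = q c powr (1 - \<theta>) * r c powr (s * \<theta>)"
      by (simp add: powr_def exp_add[symmetric] exp_diff algebra_simps)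
  qed
  moreover have "f 0 = 1"
    using q(2) by (simp add: f_def)
  ultimately show ?thesis
    using d(1) d(2)[of "d / 2"] by (intro exI[of _ "d / 2"]) auto
qed

lemma singular_and_dim_less_one_if_concentrated:
  assumes M: "prob_space M" "sets M = sets borel"
    and A: "A \<in> sets borel" "emeasure M A = 1" "hausdorff_measure s A = 0" "emeasure lborel A = 0"
    and s: "0 \<le> s" "s < 1"
  shows "singular_lebesgue M \<and> hausdorff_dim_measure M < 1"
proof -
  have "emeasure M (UNIV - A) = 0"
    using emeasure_compl[of A M] A(1,2) M prob_space.emeasure_space_1[OF M(1)] sets_eq_imp_space_eq[OF M(2)]
    by simp
  then have "singular_lebesgue M"
    unfolding singular_lebesgue_def using A(1,4) by (intro bexI[of _ "UNIV - A"]) (auto simp: Diff_Diff_Int)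
  moreover have "hausdorff_dim_measure M \<le> hausdorff_dim A"
    unfolding hausdorff_dim_measure_def using A(1,2) by (intro Inf_lower) blast
  moreover have "hausdorff_dim A \<le> ereal s"
    unfolding hausdorff_dim_def using A(3) s(1) by (intro Inf_lower) auto
  moreover have "ereal s < 1"
    using s(2) by (simp add: one_ereal_def)
  ultimately show ?thesis
    by (meson order_trans order_le_less_trans)
qed

lemma ifs_invariant_singular_and_dim_less_one:
  fixes q r a :: "'c \<Rightarrow> real"
  assumes inv: "ifs_invariant M C q r a" and M: "prob_space M" and R: "0 < R" "emeasure M {-R..R} = 1"
    and C: "finite C" and q: "\<And>c. c \<in> C \<Longrightarrow> 0 < q c" "(\<Sum>c\<in>C. q c) = 1"
    and r: "\<And>c. c \<in> C \<Longrightarrow> 0 < r c \<and> r c < 1"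
    and entropy_less: "- (\<Sum>c\<in>C. q c * ln (q c)) < - (\<Sum>c\<in>C. q c * ln (r c))"
  shows "singular_lebesgue M \<and> hausdorff_dim_measure M < 1"
proof -
  define h where "h = - (\<Sum>c\<in>C. q c * ln (q c))"
  define lyap where "lyap = - (\<Sum>c\<in>C. q c * ln (r c))"
  have "C \<noteq> {}"
    using q(2) by auto
  then have "0 < (\<Sum>c\<in>C. - (q c * ln (r c)))"
    using C q(1) r by (intro sum_pos) (auto simp: mult_pos_neg)
  then have "0 < lyap"
    by (simp add: lyap_def sum_negf)
  have "max (h / lyap) 0 < 1"
    using entropy_less \<open>0 < lyap\<close> by (simp add: h_def lyap_def)
  then obtain s where "max (h / lyap) 0 < s" "s < 1"
    using dense by blast
  then have s: "0 < s" "s < 1" "h / lyap < s"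
    by auto
  then have "h < s * lyap"
    using \<open>0 < lyap\<close> by (simp add: pos_divide_less_eq)
  have "(\<Sum>c\<in>C. q c * (s * ln (r c) - ln (q c))) = h - s * lyap"
    by (simp add: h_def lyap_def algebra_simps sum_subtractf sum_distrib_left)
  with \<open>h < s * lyap\<close> have "(\<Sum>c\<in>C. q c * (s * ln (r c) - ln (q c))) < 0"
    by simp
  then obtain \<theta> where \<theta>: "0 < \<theta>" "(\<Sum>c\<in>C. q c powr (1 - \<theta>) * r c powr (s * \<theta>)) < 1"
    using exists_moment_sum_less_one[OF C q, of r s] r by blast
  then obtain A where "A \<in> sets borel" "emeasure M A = 1" "hausdorff_measure s A = 0" "emeasure lborel A = 0"
    using ifs_invariant_concentrated_on_null_set[OF inv M R C q r s(1) less_imp_le[OF s(2)] \<theta>] by blast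
  moreover have "sets M = sets borel"
    using inv by (simp add: ifs_invariant_def)
  ultimately show ?thesis
    using M s by (intro singular_and_dim_less_one_if_concentrated) auto
qed

section \<open>The self-similar measure of the two maps\<close>

(* The symbol True stands for T1 (and for s_k = 1), False for T2; weights, ratios and translations
   of the two maps are case_bool p (1 - p), case_bool b1 b2 and case_bool b1 (- b2). *)
lemma T1_T2_case_bool: "case_bool (T1 b1) (T2 b2) a x = case_bool b1 b2 a * x + case_bool b1 (- b2) a"
  by (cases a) (simp_all add: T1_def T2_def)

lemma T1_T2_measurable [measurable]: "case_bool (T1 b1) (T2 b2) a \<in> borel_measurable borel"
proof -
  have "case_bool (T1 b1) (T2 b2) a = (\<lambda>x. case_bool b1 b2 a * x + case_bool b1 (- b2) a)"
    by (rule ext) (rule T1_T2_case_bool)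
  then show ?thesis
    by simp
qed

lemma is_selfsim_iff_ifs_invariant:
  "is_selfsim b1 b2 p M \<longleftrightarrow>
     ifs_invariant M UNIV (case_bool p (1 - p)) (case_bool b1 b2) (case_bool b1 (- b2)) \<and>
     emeasure M (space M) = 1"
proof -
  have "emeasure (distr M borel (case_bool (T1 b1) (T2 b2) a)) A
      = emeasure M ((\<lambda>x. case_bool b1 b2 a * x + case_bool b1 (- b2) a) -` A)"
    if "sets M = sets borel" "A \<in> sets borel" for a A
    using that sets_eq_imp_space_eq[OF that(1)] measurable_cong_sets[OF that(1) refl, of borel]
    by (subst emeasure_distr) (simp_all add: T1_T2_case_bool[abs_def])
  from this[where a = True] this[where a = False] show ?thesis
    unfolding is_selfsim_def ifs_invariant_def by (auto simp: UNIV_bool add.commute)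
qed

(* The point of the attractor with address \<omega>, i.e. the limit of T_(\<omega>_0) o ... o T_(\<omega>_k) applied to 0;
   its law under Bernoulli coin tosses is the self-similar measure. *)
definition coding :: "real \<Rightarrow> real \<Rightarrow> bool stream \<Rightarrow> real" where
  "coding b1 b2 \<omega> = (\<Sum>k. case_bool b1 (- b2) (\<omega> !! k) * (\<Prod>j<k. case_bool b1 b2 (\<omega> !! j)))"

context
  fixes b1 b2 :: real
  assumes b1: "0 < b1" "b1 < 1" and b2: "0 < b2" "b2 < 1"
begin

lemma abs_coding_term_le:
  "\<bar>case_bool b1 (- b2) (\<omega> !! k) * (\<Prod>j<k. case_bool b1 b2 (\<omega> !! j))\<bar> \<le> max b1 b2 ^ Suc k"
proof -
  have "\<bar>case_bool b1 (- b2) (\<omega> !! k)\<bar> \<le> max b1 b2"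
    using b1 b2 by (cases "\<omega> !! k") auto
  moreover have "\<bar>\<Prod>j<k. case_bool b1 b2 (\<omega> !! j)\<bar> \<le> max b1 b2 ^ k"
    using b1 b2 prod_mono[of "{..<k}" "\<lambda>j. \<bar>case_bool b1 b2 (\<omega> !! j)\<bar>" "\<lambda>_. max b1 b2"]
    by (simp add: abs_prod split: bool.split)
  ultimately show ?thesis
    by (simp add: abs_mult mult_mono)
qed

lemma summable_abs_coding_term:
  "summable (\<lambda>k. \<bar>case_bool b1 (- b2) (\<omega> !! k) * (\<Prod>j<k. case_bool b1 b2 (\<omega> !! j))\<bar>)"
proof -
  have "summable (\<lambda>k. max b1 b2 ^ Suc k)"
    using b1 b2 by (simp add: summable_mult summable_geometric)
  then show ?thesis
    by (rule summable_comparison_test'[where N = 0]) (metis abs_coding_term_le real_norm_def abs_abs)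
qed

lemma abs_coding_le: "\<bar>coding b1 b2 \<omega>\<bar> \<le> max b1 b2 / (1 - max b1 b2)"
proof -
  have geom: "(\<lambda>k. max b1 b2 ^ Suc k) sums (max b1 b2 / (1 - max b1 b2))"
    using b1 b2 sums_mult[OF geometric_sums[of "max b1 b2"], of "max b1 b2"] by simp
  have "\<bar>coding b1 b2 \<omega>\<bar> \<le> (\<Sum>k. \<bar>case_bool b1 (- b2) (\<omega> !! k) * (\<Prod>j<k. case_bool b1 b2 (\<omega> !! j))\<bar>)"
    unfolding coding_def by (rule summable_rabs[OF summable_abs_coding_term])
  also have "\<dots> \<le> (\<Sum>k. max b1 b2 ^ Suc k)"
    using geom by (intro suminf_le summable_abs_coding_term abs_coding_term_le) (auto simp: sums_iff)
  finally show ?thesis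
    using sums_unique[OF geom] by simp
qed

lemma coding_Stream: "coding b1 b2 (a ## \<omega>) = case_bool (T1 b1) (T2 b2) a (coding b1 b2 \<omega>)"
proof -
  let ?t = "\<lambda>\<omega> k. case_bool b1 (- b2) (\<omega> !! k) * (\<Prod>j<k. case_bool b1 b2 (\<omega> !! j))"
  have summable: "summable (?t \<omega>)" for \<omega>
    by (rule summable_rabs_cancel[OF summable_abs_coding_term])
  have "(\<lambda>k. ?t (a ## \<omega>) (Suc k)) = (\<lambda>k. case_bool b1 b2 a * ?t \<omega> k)"
    by (simp add: prod.lessThan_Suc_shift mult_ac del: prod.lessThan_Suc)
  then have "(\<Sum>k. ?t (a ## \<omega>) (Suc k)) = case_bool b1 b2 a * coding b1 b2 \<omega>"
    unfolding coding_def by (simp add: suminf_mult[OF summable])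
  then have "coding b1 b2 (a ## \<omega>) = case_bool b1 (- b2) a + case_bool b1 b2 a * coding b1 b2 \<omega>"
    using suminf_split_head[OF summable[of "a ## \<omega>"]] by (simp add: coding_def)
  then show ?thesis
    by (simp add: T1_T2_case_bool)
qed

end

lemma coding_measurable [measurable]: "coding b1 b2 \<in> borel_measurable (stream_space (measure_pmf P))"
  unfolding coding_def by measurable

definition selfsim_distr :: "real \<Rightarrow> real \<Rightarrow> real \<Rightarrow> real measure" where
  "selfsim_distr b1 b2 p = distr (stream_space (measure_pmf (bernoulli_pmf p))) borel (coding b1 b2)"

lemma is_selfsim_selfsim_distr:
  assumes b: "0 < b1" "b1 < 1" "0 < b2" "b2 < 1" and p: "0 \<le> p" "p \<le> 1"
  shows "is_selfsim b1 b2 p (selfsim_distr b1 b2 p)"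
proof -
  let ?B = "measure_pmf (bernoulli_pmf p)"
  let ?S = "stream_space ?B"
  let ?M = "selfsim_distr b1 b2 p"
  interpret S: prob_space ?S
    by (rule prob_space.prob_space_stream_space[OF prob_space_measure_pmf])
  have sets: "sets ?M = sets borel"
    by (simp add: selfsim_distr_def)
  have emeasure_M: "emeasure ?M X = (\<integral>\<^sup>+\<omega>. indicator X (coding b1 b2 \<omega>) \<partial>?S)" if "X \<in> sets borel" for X
  proof -
    have "emeasure ?M X = (\<integral>\<^sup>+x. indicator X x \<partial>?M)"
      using that by (simp add: selfsim_distr_def)
    then show ?thesis
      unfolding selfsim_distr_def using that by (subst (asm) nn_integral_distr) auto
  qed
  have "emeasure ?M A = ennreal p * emeasure (distr ?M borel (T1 b1)) A
                     + ennreal (1 - p) * emeasure (distr ?M borel (T2 b2)) A"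
    if A: "A \<in> sets borel" for A
  proof -
    have "emeasure ?M A = (\<integral>\<^sup>+a. \<integral>\<^sup>+\<omega>. indicator A (coding b1 b2 (a ## \<omega>)) \<partial>?S \<partial>?B)"
      using A by (simp add: emeasure_M, subst prob_space.nn_integral_stream_space[OF prob_space_measure_pmf]) auto
    also have "\<dots> = (\<integral>\<^sup>+a. emeasure ?M (case_bool (T1 b1) (T2 b2) a -` A) \<partial>?B)"
      using A by (intro nn_integral_cong)
        (simp add: emeasure_M[OF measurable_sets_borel[OF T1_T2_measurable A]] coding_Stream[OF b] indicator_def)
    also have "\<dots> = ennreal p * emeasure (distr ?M borel (T1 b1)) A
                     + ennreal (1 - p) * emeasure (distr ?M borel (T2 b2)) A"
    proof -
      have "T1 b1 \<in> measurable ?M borel" "T2 b2 \<in> measurable ?M borel"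
        using T1_T2_measurable[of b1 b2 True] T1_T2_measurable[of b1 b2 False]
          measurable_cong_sets[OF sets refl, of borel] by auto
      then show ?thesis
        using A p sets_eq_imp_space_eq[OF sets] by (simp add: emeasure_distr mult.commute)
    qed
    finally show ?thesis .
  qed
  moreover have "emeasure ?M (space ?M) = 1"
    unfolding selfsim_distr_def by (rule prob_space.emeasure_space_1[OF S.prob_space_distr]) simp
  ultimately show ?thesis
    unfolding is_selfsim_def using sets by simp
qed

lemma selfsim_distr_concentrated:
  assumes b: "0 < b1" "b1 < 1" "0 < b2" "b2 < 1"
  shows "emeasure (selfsim_distr b1 b2 p) {- (max b1 b2 / (1 - max b1 b2)) .. max b1 b2 / (1 - max b1 b2)} = 1"
proof -
  interpret S: prob_space "stream_space (measure_pmf (bernoulli_pmf p))"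
    by (rule prob_space.prob_space_stream_space[OF prob_space_measure_pmf])
  let ?R = "max b1 b2 / (1 - max b1 b2)"
  have "coding b1 b2 -` {-?R..?R} \<inter> space (stream_space (measure_pmf (bernoulli_pmf p)))
      = space (stream_space (measure_pmf (bernoulli_pmf p)))"
  proof -
    have "- ?R \<le> coding b1 b2 \<omega> \<and> coding b1 b2 \<omega> \<le> ?R" for \<omega>
      using abs_coding_le[OF b, of \<omega>] unfolding abs_le_iff by linarith
    then show ?thesis
      by (auto simp: space_stream_space)
  qed
  then show ?thesis
    by (simp add: selfsim_distr_def emeasure_distr S.emeasure_space_1)
qed

section \<open>Uniqueness via characteristic functions\<close>

lemma is_selfsim_real_distribution: "is_selfsim b1 b2 p M \<Longrightarrow> real_distribution M"
  unfolding is_selfsim_def real_distribution_def real_distribution_axioms_def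
  by (auto intro: prob_spaceI)

lemma is_selfsim_eq_bind:
  assumes ss: "is_selfsim b1 b2 p M" and p: "0 \<le> p" "p \<le> 1"
  shows "M = measure_pmf (bernoulli_pmf p) \<bind> (\<lambda>a. distr M borel (case_bool (T1 b1) (T2 b2) a))"
proof (rule measure_eqI)
  interpret real_distribution M
    by (rule is_selfsim_real_distribution[OF ss])
  have "distr M borel (case_bool (T1 b1) (T2 b2) a) \<in> space (subprob_algebra borel)" for a
    using prob_space_distr[of "case_bool (T1 b1) (T2 b2) a" borel]
    by (auto simp: space_subprob_algebra intro: prob_space_imp_subprob_space)
  then have kernel: "(\<lambda>a. distr M borel (case_bool (T1 b1) (T2 b2) a))
      \<in> measurable (measure_pmf (bernoulli_pmf p)) (subprob_algebra borel)"
    by simp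
  show "sets M = sets (measure_pmf (bernoulli_pmf p) \<bind> (\<lambda>a. distr M borel (case_bool (T1 b1) (T2 b2) a)))"
    by (subst sets_bind[where N = borel]) auto
  fix A assume "A \<in> sets M"
  then show "emeasure M A = emeasure (measure_pmf (bernoulli_pmf p) \<bind> (\<lambda>a. distr M borel (case_bool (T1 b1) (T2 b2) a))) A"
    using ss p by (simp add: emeasure_bind[OF _ kernel] is_selfsim_def mult.commute)
qed

lemma is_selfsim_integral:
  fixes f :: "real \<Rightarrow> real"
  assumes ss: "is_selfsim b1 b2 p M" and p: "0 \<le> p" "p \<le> 1"
    and f [measurable]: "f \<in> borel_measurable borel" and bounded: "\<And>x. \<bar>f x\<bar> \<le> K"
  shows "(\<integral>x. f x \<partial>M) = p * (\<integral>x. f (T1 b1 x) \<partial>M) + (1 - p) * (\<integral>x. f (T2 b2 x) \<partial>M)"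
proof -
  interpret real_distribution M
    by (rule is_selfsim_real_distribution[OF ss])
  have "distr M borel (case_bool (T1 b1) (T2 b2) a) \<in> space (subprob_algebra borel)" for a
    using prob_space_distr[of "case_bool (T1 b1) (T2 b2) a" borel]
    by (auto simp: space_subprob_algebra intro: prob_space_imp_subprob_space)
  then have kernel: "(\<lambda>a. distr M borel (case_bool (T1 b1) (T2 b2) a))
      \<in> measurable (measure_pmf (bernoulli_pmf p)) (subprob_algebra borel)"
    by simp
  have "(\<integral>x. f x \<partial>M) = (\<integral>a. (\<integral>x. f x \<partial>distr M borel (case_bool (T1 b1) (T2 b2) a)) \<partial>bernoulli_pmf p)"
  proof (subst is_selfsim_eq_bind[OF ss p], rule integral_bind[OF f _ kernel, where B = K and B' = 1])
    have "emeasure (distr M borel (case_bool (T1 b1) (T2 b2) a)) UNIV = 1" for a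
      using prob_space.emeasure_space_1[OF prob_space_distr[of "case_bool (T1 b1) (T2 b2) a" borel]] by simp
    then show "AE a in bernoulli_pmf p. emeasure (distr M borel (case_bool (T1 b1) (T2 b2) a))
        (space (distr M borel (case_bool (T1 b1) (T2 b2) a))) \<le> ennreal 1"
      by simp
    show "finite_measure (measure_pmf (bernoulli_pmf p))"
      by (rule prob_space.axioms(1)[OF prob_space_measure_pmf])
  qed (rule bounded)
  then show ?thesis
    using p by (simp add: integral_distr mult.commute)
qed

lemma is_selfsim_char:
  assumes ss: "is_selfsim b1 b2 p M" and p: "0 \<le> p" "p \<le> 1"
  shows "char M t = p * iexp (t * b1) * char M (b1 * t) + (1 - p) * iexp (- (t * b2)) * char M (b2 * t)"
proof -
  interpret real_distribution M
    by (rule is_selfsim_real_distribution[OF ss])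
  note [measurable] = T1_T2_measurable[of b1 b2 True, simplified] T1_T2_measurable[of b1 b2 False, simplified]
  have integrable: "integrable M (\<lambda>x. iexp (t * x))" "integrable M (\<lambda>x. iexp (t * T1 b1 x))"
    "integrable M (\<lambda>x. iexp (t * T2 b2 x))"
    by (intro integrable_const_bound[where B = 1]; simp add: norm_exp_i_times)+
  have "(\<integral>x. g (iexp (t * x)) \<partial>M) = p * (\<integral>x. g (iexp (t * T1 b1 x)) \<partial>M) + (1 - p) * (\<integral>x. g (iexp (t * T2 b2 x)) \<partial>M)"
    if "g = Re \<or> g = Im" for g
    using that by (intro is_selfsim_integral[OF ss p, where K = 1])
      (auto intro: order_trans[OF abs_Re_le_cmod] order_trans[OF abs_Im_le_cmod] simp: norm_exp_i_times)
  from this[of Re] this[of Im]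
  have "char M t = p * (\<integral>x. iexp (t * T1 b1 x) \<partial>M) + (1 - p) * (\<integral>x. iexp (t * T2 b2 x) \<partial>M)"
    unfolding char_def using integrable by (simp add: complex_eq_iff)
  moreover have "iexp (t * T1 b1 x) = iexp (t * b1) * iexp (b1 * t * x)"
    "iexp (t * T2 b2 x) = iexp (- (t * b2)) * iexp (b2 * t * x)" for x
    by (simp_all add: T1_def T2_def algebra_simps flip: exp_add)
  ultimately show ?thesis
    by (simp add: char_def mult.assoc)
qed

lemma eq_0_if_norm_le_rescaled_mean:
  fixes D :: "real \<Rightarrow> 'a::real_normed_vector"
  assumes cont: "isCont D 0" and D0: "D 0 = 0" and p: "0 \<le> p" "p \<le> 1"
    and b: "\<bar>b1\<bar> < 1" "\<bar>b2\<bar> < 1"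
    and mean: "\<And>t. norm (D t) \<le> p * norm (D (b1 * t)) + (1 - p) * norm (D (b2 * t))"
  shows "D t = 0"
proof -
  define r where "r = max \<bar>b1\<bar> \<bar>b2\<bar>"
  have r: "0 \<le> r" "r < 1" "\<bar>b1\<bar> \<le> r" "\<bar>b2\<bar> \<le> r"
    using b by (auto simp: r_def)
  have "norm (D t) \<le> \<epsilon>" if "0 < \<epsilon>" for \<epsilon>
  proof -
    obtain \<delta> where \<delta>: "0 < \<delta>" and near0: "\<And>u. u \<noteq> 0 \<and> norm (u - 0) < \<delta> \<Longrightarrow> norm (D u - D 0) < \<epsilon>"
      using LIM_D[OF cont[unfolded isCont_def] \<open>0 < \<epsilon>\<close>] by blast
    have near: "norm (D u) < \<epsilon>" if "\<bar>u\<bar> < \<delta>" for u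
      using near0[of u] that D0 \<open>0 < \<epsilon>\<close> by (cases "u = 0") auto
    have "\<forall>u. \<bar>u\<bar> * r ^ N < \<delta> \<longrightarrow> norm (D u) \<le> \<epsilon>" for N
    proof (induction N)
      case 0
      then show ?case
        using near by (auto intro: less_imp_le)
    next
      case (Suc N)
      show ?case
      proof (intro allI impI)
        fix u assume u: "\<bar>u\<bar> * r ^ Suc N < \<delta>"
        have "\<bar>b * u\<bar> * r ^ N < \<delta>" if "\<bar>b\<bar> \<le> r" for b
          using u mult_right_mono[OF that, of "\<bar>u\<bar> * r ^ N"] r(1) by (simp add: abs_mult mult_ac)
        then have "norm (D (b1 * u)) \<le> \<epsilon>" "norm (D (b2 * u)) \<le> \<epsilon>"
          using Suc.IH r(3,4) by blast+
        then have "p * norm (D (b1 * u)) + (1 - p) * norm (D (b2 * u)) \<le> p * \<epsilon> + (1 - p) * \<epsilon>"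
          using p by (intro add_mono mult_left_mono) auto
        then show "norm (D u) \<le> \<epsilon>"
          using mean[of u] by (simp add: algebra_simps)
      qed
    qed
    moreover have "(\<lambda>N. \<bar>t\<bar> * r ^ N) \<longlonglongrightarrow> 0"
      using r by (intro tendsto_mult_right_zero LIMSEQ_power_zero) auto
    then have "eventually (\<lambda>N. \<bar>t\<bar> * r ^ N < \<delta>) sequentially"
      using \<delta> by (rule order_tendstoD(2))
    then obtain N where "\<bar>t\<bar> * r ^ N < \<delta>"
      by (auto simp: eventually_sequentially)
    ultimately show ?thesis
      by blast
  qed
  then show ?thesis
    using field_le_epsilon[of "norm (D t)" 0] by simp
qed

lemma is_selfsim_unique:
  assumes ss: "is_selfsim b1 b2 p M" and ss': "is_selfsim b1 b2 p M'"
    and b: "0 < b1" "b1 < 1" "0 < b2" "b2 < 1" and p: "0 \<le> p" "p \<le> 1"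
  shows "M = M'"
proof (rule Levy_uniqueness[OF is_selfsim_real_distribution[OF ss] is_selfsim_real_distribution[OF ss']])
  interpret M: real_distribution M by (rule is_selfsim_real_distribution[OF ss])
  interpret M': real_distribution M' by (rule is_selfsim_real_distribution[OF ss'])
  define D where "D t = char M t - char M' t" for t
  have mean: "norm (D t) \<le> p * norm (D (b1 * t)) + (1 - p) * norm (D (b2 * t))" for t
  proof -
    have "D t = p * iexp (t * b1) * D (b1 * t) + (1 - p) * iexp (- (t * b2)) * D (b2 * t)"
      unfolding D_def is_selfsim_char[OF ss p, of t] is_selfsim_char[OF ss' p, of t] by (simp add: algebra_simps)
    then have "norm (D t) \<le> norm (p * iexp (t * b1) * D (b1 * t)) + norm ((1 - p) * iexp (- (t * b2)) * D (b2 * t))"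
      by (simp add: norm_triangle_ineq)
    also have "\<dots> = p * norm (D (b1 * t)) + (1 - p) * norm (D (b2 * t))"
      using p by (simp add: norm_mult norm_exp_i_times abs_of_nonneg del: of_real_diff)
    finally show ?thesis .
  qed
  have "isCont D 0"
    unfolding D_def[abs_def] by (intro continuous_intros M.isCont_char M'.isCont_char)
  moreover have "D 0 = 0"
    by (simp add: D_def M.char_zero M'.char_zero)
  ultimately have "D t = 0" for t
    by (rule eq_0_if_norm_le_rescaled_mean[OF _ _ p _ _ mean]) (use b in auto)
  then show "char M = char M'"
    unfolding D_def by (intro ext) simp
qed

lemma selfsim_measure_eq_selfsim_distr:
  assumes b: "0 < b1" "b1 < 1" "0 < b2" "b2 < 1" and p: "0 \<le> p" "p \<le> 1"
  shows "selfsim_measure b1 b2 p = selfsim_distr b1 b2 p"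
  unfolding selfsim_measure_def
proof (rule the_equality)
  show "is_selfsim b1 b2 p (selfsim_distr b1 b2 p)"
    by (rule is_selfsim_selfsim_distr[OF b p])
qed (rule is_selfsim_unique[OF _ is_selfsim_selfsim_distr[OF b p] b p])

section \<open>The exact overlap\<close>

lemma sharp_Suc: "sharp s (Suc k) = sharp s k + (if s (Suc k) = 1 then 1 else 0)"
proof -
  have "{j \<in> {1..Suc k}. s j = 1} = {j \<in> {1..k}. s j = 1} \<union> (if s (Suc k) = 1 then {Suc k} else {})"
    by (auto simp: le_Suc_eq)
  then show ?thesis
    unfolding sharp_def by (simp add: card_insert_if)
qed

lemma sharp_le: "sharp s k \<le> k"
proof -
  have "sharp s k \<le> card {1..k}"
    unfolding sharp_def by (rule card_mono) auto
  then show ?thesis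
    by simp
qed

lemma sharp_tilde_Suc: "sharp_tilde s (Suc k) = sharp_tilde s k + (if s (Suc k) = 1 then 0 else 1)"
  using sharp_le[of s k] by (simp add: sharp_tilde_def sharp_Suc)

(* Sign sequences are indexed from 1, as in sharp. *)
definition word_of :: "(nat \<Rightarrow> int) \<Rightarrow> nat \<Rightarrow> bool list" where
  "word_of s k = map (\<lambda>j. s j = 1) [1..<Suc k]"

lemma word_of_Suc: "word_of s (Suc k) = word_of s k @ [s (Suc k) = 1]"
  by (simp add: word_of_def)

lemma word_of_in_words: "word_of s k \<in> words UNIV k"
  by (simp add: word_of_def words_def)

lemma prod_list_word_of:
  fixes x y :: "'a::comm_monoid_mult"
  shows "prod_list (map (case_bool x y) (word_of s k)) = x ^ sharp s k * y ^ sharp_tilde s k"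
proof (induction k)
  case (Suc k)
  then show ?case
    by (cases "s (Suc k) = 1") (simp_all add: word_of_Suc sharp_Suc sharp_tilde_Suc mult_ac)
qed (simp add: word_of_def sharp_def sharp_tilde_def)

lemma word_shift_word_of:
  assumes "\<forall>j\<in>{1..k}. s j \<in> {-1, 1}"
  shows "word_shift (case_bool b1 b2) (case_bool b1 (- b2)) (word_of s k)
       = (\<Sum>j = 1..k. real_of_int (s j) * b1 ^ sharp s j * b2 ^ sharp_tilde s j)"
  using assms
proof (induction k)
  case (Suc k)
  have "s (Suc k) \<in> {-1, 1}"
    using Suc.prems by auto
  then have "prod_list (map (case_bool b1 b2) (word_of s k)) * case_bool b1 (- b2) (s (Suc k) = 1)
      = real_of_int (s (Suc k)) * b1 ^ sharp s (Suc k) * b2 ^ sharp_tilde s (Suc k)"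
    by (auto simp: prod_list_word_of sharp_Suc sharp_tilde_Suc)
  with Suc show ?case
    by (simp add: word_of_Suc word_shift_snoc)
qed (simp add: word_of_def)

lemma word_of_neq:
  assumes "\<forall>j\<in>{1..n}. s j \<in> {-1, 1}" "\<forall>j\<in>{1..n}. t j \<in> {-1, 1}" "\<exists>j\<in>{1..n}. s j \<noteq> t j"
  shows "word_of s n \<noteq> word_of t n"
proof
  assume eq: "word_of s n = word_of t n"
  obtain j where j: "j \<in> {1..n}" "s j \<noteq> t j"
    using assms(3) by blast
  have "word_of s n ! (j - 1) = (s j = 1)" "word_of t n ! (j - 1) = (t j = 1)"
    using j(1) by (auto simp: word_of_def nth_append simp del: upt_Suc)
  moreover have "s j \<in> {-1, 1}" "t j \<in> {-1, 1}"
    using j(1) assms(1,2) by auto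
  ultimately show False
    using eq j(2) by auto
qed

lemma exists_entropy_slightly_above_lyapunov:
  fixes g :: "real \<Rightarrow> real"
  assumes b: "0 < b1" "b1 < 1" "0 < b2" "b2 < 1" "1 < b1 + b2"
    and g: "continuous_on {0<..<1} g" "\<And>p. 0 < p \<Longrightarrow> p < 1 \<Longrightarrow> 0 < g p"
  shows "\<exists>p. 0 < p \<and> p < 1 \<and> 0 < - p * ln p - (1 - p) * ln (1 - p) + p * ln b1 + (1 - p) * ln b2
           \<and> - p * ln p - (1 - p) * ln (1 - p) + p * ln b1 + (1 - p) * ln b2 < g p"
proof -
  define F where "F p = - p * ln p - (1 - p) * ln (1 - p) + p * ln b1 + (1 - p) * ln b2" for p :: real
  define p0 where "p0 = b1 / (b1 + b2)"
  have p0: "0 < p0" "p0 < 1"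
    using b by (auto simp: p0_def field_simps)
  have "F p0 = ln (b1 + b2)"
  proof -
    have "1 - p0 = b2 / (b1 + b2)"
      using b by (simp add: p0_def field_simps)
    then have ln_p0: "ln p0 = ln b1 - ln (b1 + b2)" "ln (1 - p0) = ln b2 - ln (b1 + b2)"
      using b by (simp_all add: p0_def ln_div)
    show ?thesis
      unfolding F_def ln_p0 by (simp add: algebra_simps)
  qed
  then have F_p0: "0 < F p0"
    using b by simp
  show ?thesis
  proof (cases "F p0 < g p0")
    case True
    then show ?thesis
      using p0 F_p0 by (auto simp: F_def)
  next
    case False
    have "((\<lambda>p::real. - p * ln p) \<longlongrightarrow> 0) (at_right 0)"
      by real_asymp
    then have "(F \<longlongrightarrow> 0 - (1 - 0) * ln (1 - 0) + 0 * ln b1 + (1 - 0) * ln b2) (at_right 0)"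
      unfolding F_def[abs_def] by (intro tendsto_intros) auto
    moreover have "ln b2 < 0"
      using b by simp
    ultimately have "eventually (\<lambda>p. F p < 0) (at_right 0)"
      by (intro order_tendstoD(2)) auto
    then obtain e where e: "0 < e" "e < p0" "F e < 0"
      using p0(1) by (metis eventually_at_right_field min.strict_boundedE min_less_iff_conj field_lbound_gt_zero)
    have "continuous_on {e..p0} (\<lambda>p. F p - g p / 2)"
      unfolding F_def using e p0
      by (intro continuous_intros continuous_on_subset[OF g(1)]) auto
    then obtain x where x: "e \<le> x" "x \<le> p0" "F x - g x / 2 = 0"
      using IVT'[of "\<lambda>p. F p - g p / 2" e 0 p0] False e g(2)[of e] g(2)[OF p0] p0 by force
    then have "0 < x" "x < 1" "0 < F x" "F x < g x"
      using e p0 g(2)[of x] by auto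
    then show ?thesis
      by (auto simp: F_def)
  qed
qed

lemma selfsim_measure_properties:
  assumes b: "0 < b1" "b1 < 1" "0 < b2" "b2 < 1" and p: "0 \<le> p" "p \<le> 1"
  shows "ifs_invariant (selfsim_measure b1 b2 p) UNIV (case_bool p (1 - p)) (case_bool b1 b2) (case_bool b1 (- b2))"
    and "prob_space (selfsim_measure b1 b2 p)"
    and "emeasure (selfsim_measure b1 b2 p) {- (max b1 b2 / (1 - max b1 b2)) .. max b1 b2 / (1 - max b1 b2)} = 1"
  using is_selfsim_selfsim_distr[OF b p] selfsim_distr_concentrated[OF b]
    is_selfsim_real_distribution[OF is_selfsim_selfsim_distr[OF b p]]
  unfolding selfsim_measure_eq_selfsim_distr[OF b p] is_selfsim_iff_ifs_invariant real_distribution_def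
  by auto

lemma selfsim_measure_singular_if_exact_overlap:
  fixes u v :: "bool list"
  assumes b: "0 < b1" "b1 < 1" "0 < b2" "b2 < 1" and p: "0 < p" "p < 1"
    and uv: "u \<in> words UNIV n" "v \<in> words UNIV n" "u \<noteq> v"
    and same_ratio: "prod_list (map (case_bool b1 b2) u) = prod_list (map (case_bool b1 b2) v)"
    and same_shift: "word_shift (case_bool b1 b2) (case_bool b1 (- b2)) u
                   = word_shift (case_bool b1 b2) (case_bool b1 (- b2)) v"
    and same_weight: "prod_list (map (case_bool p (1 - p)) u) = prod_list (map (case_bool p (1 - p)) v)"
    and drop: "n * (- p * ln p - (1 - p) * ln (1 - p)) - 2 * prod_list (map (case_bool p (1 - p)) u) * ln 2
               < n * (- p * ln b1 - (1 - p) * ln b2)"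
  shows "singular_lebesgue (selfsim_measure b1 b2 p) \<and> hausdorff_dim_measure (selfsim_measure b1 b2 p) < 1"
proof -
  let ?M = "selfsim_measure b1 b2 p" and ?W = "words (UNIV :: bool set) n"
  let ?q = "\<lambda>w. prod_list (map (case_bool p (1 - p)) w)" and ?r = "\<lambda>w. prod_list (map (case_bool b1 b2) w)"
  define P where "P = ?q u"
  note M = selfsim_measure_properties[OF b less_imp_le[OF p(1)] less_imp_le[OF p(2)]]
  have "0 < n"
    using uv by (cases n) (auto simp: words_def)
  have q: "0 < ?q w" and r: "0 < ?r w \<and> ?r w < 1" if "w \<in> ?W" for w
  proof -
    show "0 < ?q w"
      using p by (intro prod_list_map_pos) (simp split: bool.split)
    have "?r w \<le> max b1 b2 ^ n"
      using that b prod_list_map_le_power[of w "case_bool b1 b2" "max b1 b2"] by (force simp: words_def split: bool.split)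
    also have "\<dots> < 1"
      using b \<open>0 < n\<close> by (simp add: power_less_one_iff)
    finally show "0 < ?r w \<and> ?r w < 1"
      using b by (auto intro!: prod_list_map_pos split: bool.split)
  qed
  have P: "0 < P" "?q v = P"
    using q uv same_weight by (auto simp: P_def)
  have inv: "ifs_invariant ?M (?W - {v}) (?q(u := 2 * P)) ?r (word_shift (case_bool b1 b2) (case_bool b1 (- b2)))"
    using ifs_invariant_merge[OF ifs_invariant_words[OF M(1)] finite_words uv same_ratio same_shift] P p
    by (simp add: P_def split: bool.split)
  have sum_q: "(\<Sum>w\<in>?W. ?q w) = 1"
    by (simp add: sum_words_prod_list UNIV_bool)
  have entropy: "(\<Sum>w\<in>?W. ?q w * ln (?q w)) = n * (p * ln p + (1 - p) * ln (1 - p))"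
    using p sum_q by (subst sum_words_prod_list_ln) (auto simp: UNIV_bool split: bool.split)
  have lyap: "(\<Sum>w\<in>?W. ?q w * ln (?r w)) = n * (p * ln b1 + (1 - p) * ln b2)"
    using b sum_q by (subst sum_words_prod_list_ln) (auto simp: UNIV_bool split: bool.split)
  show ?thesis
  proof (rule ifs_invariant_singular_and_dim_less_one[OF inv M(2) _ M(3)])
    show "0 < max b1 b2 / (1 - max b1 b2)"
      using b by auto
    show "finite (?W - {v})"
      by (simp add: finite_words)
    show "0 < (?q(u := 2 * P)) w" and "0 < ?r w \<and> ?r w < 1" if "w \<in> ?W - {v}" for w
      using that q r P by auto
    show "(\<Sum>w\<in>?W - {v}. (?q(u := 2 * P)) w) = 1"
      using sum_merge[OF finite_words uv, of "\<lambda>x w. x" ?q "2 * P"] sum_q P by (simp add: P_def)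
    have "(\<Sum>w\<in>?W - {v}. (?q(u := 2 * P)) w * ln ((?q(u := 2 * P)) w))
        = (\<Sum>w\<in>?W. ?q w * ln (?q w)) + 2 * P * ln 2"
      using sum_merge[OF finite_words uv, of "\<lambda>x w. x * ln x" ?q "2 * P"] P
      by (simp add: P_def ln_mult algebra_simps)
    moreover have "(\<Sum>w\<in>?W - {v}. (?q(u := 2 * P)) w * ln (?r w)) = (\<Sum>w\<in>?W. ?q w * ln (?r w))"
      using sum_merge[OF finite_words uv, of "\<lambda>x w. x * ln (?r w)" ?q "2 * P"] P same_ratio
      by (simp add: P_def algebra_simps)
    ultimately show "- (\<Sum>w\<in>?W - {v}. (?q(u := 2 * P)) w * ln ((?q(u := 2 * P)) w))
        < - (\<Sum>w\<in>?W - {v}. (?q(u := 2 * P)) w * ln (?r w))"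
      using drop entropy lyap by (simp add: P_def algebra_simps)
  qed
qed

lemma one_less_sim_dim_iff:
  assumes "0 < b1" "b1 < 1" "0 < b2" "b2 < 1" "0 < p" "p < 1"
  shows "1 < sim_dim b1 b2 p \<longleftrightarrow> 0 < - p * ln p - (1 - p) * ln (1 - p) + p * ln b1 + (1 - p) * ln b2"
proof -
  have "p * ln b1 < 0" "(1 - p) * ln b2 < 0"
    using assms by (simp_all add: mult_pos_neg)
  then have "0 < - p * ln b1 - (1 - p) * ln b2"
    by simp
  then have "1 < sim_dim b1 b2 p \<longleftrightarrow> - p * ln b1 - (1 - p) * ln b2 < - p * ln p - (1 - p) * ln (1 - p)"
    unfolding sim_dim_def by (simp add: pos_less_divide_eq)
  then show ?thesis
    by argo
qed

theorem theorem1p2: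
  fixes n :: nat and s t :: "nat \<Rightarrow> int" and b1 b2 :: real
  assumes "n \<ge> 3"
    and "\<forall>k \<in> {1..n}. s k \<in> {-1, 1}"
    and "\<forall>k \<in> {1..n}. t k \<in> {-1, 1}"
    and "\<exists>k \<in> {1..n}. s k \<noteq> t k"
    and "sharp s n = sharp t n"
    and "0 < b1" "b1 < 1" "0 < b2" "b2 < 1"
    and "b1 + b2 > 1"
    and "(\<Sum>k = 1..n. real_of_int (s k) * b1 ^ sharp s k * b2 ^ sharp_tilde s k
                      - real_of_int (t k) * b1 ^ sharp t k * b2 ^ sharp_tilde t k) = 0"
  shows "\<exists>p. 0 < p \<and> p < 1 \<and> sim_dim b1 b2 p > 1
           \<and> singular_lebesgue (selfsim_measure b1 b2 p)
           \<and> hausdorff_dim_measure (selfsim_measure b1 b2 p) < 1"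
proof -
  note b = assms(6-9)
  have sharp_tilde_eq: "sharp_tilde s n = sharp_tilde t n"
    using assms(5) by (simp add: sharp_tilde_def)
  define g where "g p = 2 * ln 2 * (p ^ sharp s n * (1 - p) ^ sharp_tilde s n) / n" for p :: real
  obtain p where p: "0 < p" "p < 1"
    and gap: "0 < - p * ln p - (1 - p) * ln (1 - p) + p * ln b1 + (1 - p) * ln b2"
      "- p * ln p - (1 - p) * ln (1 - p) + p * ln b1 + (1 - p) * ln b2 < g p"
    using exists_entropy_slightly_above_lyapunov[OF b assms(10), of g] assms(1)
    by (force simp: g_def intro!: continuous_intros)
  have "singular_lebesgue (selfsim_measure b1 b2 p) \<and> hausdorff_dim_measure (selfsim_measure b1 b2 p) < 1"
  proof (rule selfsim_measure_singular_if_exact_overlap[OF b p word_of_in_words word_of_in_words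
        word_of_neq[OF assms(2-4)]])
    show "word_shift (case_bool b1 b2) (case_bool b1 (- b2)) (word_of s n)
        = word_shift (case_bool b1 b2) (case_bool b1 (- b2)) (word_of t n)"
      using assms(11) by (simp add: word_shift_word_of[OF assms(2)] word_shift_word_of[OF assms(3)] sum_subtractf)
    show "n * (- p * ln p - (1 - p) * ln (1 - p)) - 2 * prod_list (map (case_bool p (1 - p)) (word_of s n)) * ln 2
        < n * (- p * ln b1 - (1 - p) * ln b2)"
      using gap(2) assms(1) by (simp add: g_def prod_list_word_of field_simps)
  qed (simp_all add: prod_list_word_of assms(5) sharp_tilde_eq)
  then show ?thesis
    using p gap(1) one_less_sim_dim_iff[OF b p] by blast
qed

end
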